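(* For each $D=DC_i^{\pm}(n,q)$ with $N=|D|$ and a fixed ordering $g_1,\dots,g_N$ of $D$, the $\mathbb F_3$-linear map $\mathbb F_q\to\mathbb F_3^N$, $a\mapsto c(a)=(\mathrm{tr}(a\,\mathrm{Tr}\,g_1),\dots,\mathrm{tr}(a\,\mathrm{Tr}\,g_N))$, is injective (hence an $\mathbb F_3$-linear isomorphism of $\mathbb F_q$ onto $C(D)^\perp=\{c(a):a\in\mathbb F_q\}$) in each of the following cases, for all $q$: (1) $i=1,2,3$, sign $+$, $n\ge2$ even; (2) $i=4$, sign $+$, $n\ge4$ even; (3) $i=1$, sign $-$, $n\ge1$ odd; (4) $i=2,3,4$, sign $-$, $n\ge3$ odd.
   Context: $q=3^s$, $\mathrm{tr}:\mathbb F_q\to\mathbb F_3$ the absolute trace, $\mathrm{Tr}$ the matrix trace. Fix a nonsquare $\epsilon\in\mathbb F_q^*$, $\delta_\epsilon=\mathrm{diag}(1,-\epsilon)$, $J=\begin{bmatrix}0&1_{n-1}&0\\1_{n-1}&0&0\\0&0&\delta_\epsilon\end{bmatrix}$, $O^-(2n,q)=\{w\in GL(2n,q):{}^twJw=J\}$, $SO^-$ its determinant-one subgroup. $Q=Q(2n,q)$: products $\begin{bmatrix}A&0&0\\0&{}^tA^{-1}&0\\0&0&i\end{bmatrix}\begin{bmatrix}1_{n-1}&B&-{}^th\delta_\epsilon\\0&1_{n-1}&0\\0&h&1_2\end{bmatrix}$, $A\in GL(n-1,q)$, $i\in SO^-(2,q)$, ${}^tB+B+{}^th\delta_\epsilon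 h=0$. $\rho=\mathrm{diag}(1_{n-1},1_{n-1},1,-1)$, $\sigma_r=\begin{bmatrix}0&0&1_r&0&0\\0&1_{n-1-r}&0&0&0\\1_r&0&0&0&0\\0&0&0&1_{n-1-r}&0\\0&0&0&0&1_2\end{bmatrix}$. $DC_1^{\pm}=Q\sigma_{n-1}Q$, $DC_2^{\pm}=Q\sigma_{n-2}Q$, $DC_3^{\pm}=\rho Q\sigma_{n-2}Q$, $DC_4^{\pm}=\rho Q\sigma_{n-3}Q$, with sign $+$ for $n$ even and $-$ for $n$ odd; $Q\sigma Q=\{x\sigma y\}$, $\rho Q\sigma Q=\{\rho x\sigma y\}$, $x,y\in Q$. The ternary code is $C(D)=\{u\in\mathbb F_3^N:\sum_j u_j\,\mathrm{Tr}(g_j)=0\text{ in }\mathbb F_q\}$ and $C(D)^\perp$ its dual in $\mathbb F_3^N$ under the standard inner product. *)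

theory Defs
  imports "Jordan_Normal_Form.Determinant"
begin

(* Matrices are JNF matrices over a finite field 'a of characteristic 3.
   Indices are 0-based.  A 2n x 2n matrix is split into row/column blocks of
   sizes n-1, n-1, 2 (block indices 0,1,2). *)

definition mtrace :: "'a::comm_ring_1 mat \<Rightarrow> 'a" where
  "mtrace A = (\<Sum>i<dim_row A. A $$ (i,i))"

(* absolute trace F_q -> F_3 (values in the prime field), q = 3^s *)
definition abs_tr :: "nat \<Rightarrow> 'a::field \<Rightarrow> 'a" where
  "abs_tr s x = (\<Sum>i<s. x ^ (3 ^ i))"

definition nonsquare :: "'a::field \<Rightarrow> bool" where
  "nonsquare e \<longleftrightarrow> e \<noteq> 0 \<and> \<not> (\<exists>x. x * x = e)"

definition delta_eps :: "'a::field \<Rightarrow> 'a mat" where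
  "delta_eps e = mat 2 2 (\<lambda>(i,j). if i = 0 \<and> j = 0 then 1 else if i = 1 \<and> j = 1 then - e else 0)"

definition bidx :: "nat \<Rightarrow> nat \<Rightarrow> nat" where
  "bidx m i = (if i < m then 0 else if i < 2*m then 1 else 2)"

definition boff :: "nat \<Rightarrow> nat \<Rightarrow> nat" where
  "boff m b = (if b = 0 then 0 else if b = 1 then m else 2*m)"

(* 3x3 block matrix with block sizes m, m, 2; M b c is the (b,c) block *)
definition blk3 :: "nat \<Rightarrow> (nat \<Rightarrow> nat \<Rightarrow> 'a mat) \<Rightarrow> 'a mat" where
  "blk3 m M = mat (2*m+2) (2*m+2)
     (\<lambda>(i,j). M (bidx m i) (bidx m j) $$ (i - boff m (bidx m i), j - boff m (bidx m j)))"

definition Jmat :: "nat \<Rightarrow> 'a::field \<Rightarrow> 'a mat" where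
  "Jmat n e = blk3 (n-1) (\<lambda>b c.
      if b = 0 \<and> c = 1 then 1\<^sub>m (n-1)
      else if b = 1 \<and> c = 0 then 1\<^sub>m (n-1)
      else if b = 2 \<and> c = 2 then delta_eps e
      else 0\<^sub>m (if b = 2 then 2 else n-1) (if c = 2 then 2 else n-1))"

definition Ominus :: "nat \<Rightarrow> 'a::field \<Rightarrow> 'a mat set" where
  "Ominus n e = {w \<in> carrier_mat (2*n) (2*n). det w \<noteq> 0 \<and> transpose_mat w * Jmat n e * w = Jmat n e}"

definition SOminus :: "nat \<Rightarrow> 'a::field \<Rightarrow> 'a mat set" where
  "SOminus n e = {w \<in> Ominus n e. det w = 1}"

definition SO2minus :: "'a::field \<Rightarrow> 'a mat set" where
  "SO2minus e = {w \<in> carrier_mat 2 2. det w = 1 \<and> transpose_mat w * delta_eps e * w = delta_eps e}"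

definition Qgrp :: "nat \<Rightarrow> 'a::field \<Rightarrow> 'a mat set" where
  "Qgrp n e = {blk3 (n-1) (\<lambda>b c.
          if b = 0 \<and> c = 0 then A
          else if b = 1 \<and> c = 1 then transpose_mat Ainv
          else if b = 2 \<and> c = 2 then i
          else 0\<^sub>m (if b = 2 then 2 else n-1) (if c = 2 then 2 else n-1))
      * blk3 (n-1) (\<lambda>b c.
          if b = 0 \<and> c = 0 then 1\<^sub>m (n-1)
          else if b = 0 \<and> c = 1 then B
          else if b = 0 \<and> c = 2 then - (transpose_mat h * delta_eps e)
          else if b = 1 \<and> c = 1 then 1\<^sub>m (n-1)
          else if b = 2 \<and> c = 1 then h
          else if b = 2 \<and> c = 2 then 1\<^sub>m 2
          else 0\<^sub>m (if b = 2 then 2 else n-1) (if c = 2 then 2 else n-1))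
    | A Ainv i B h.
        A \<in> carrier_mat (n-1) (n-1) \<and> Ainv \<in> carrier_mat (n-1) (n-1) \<and>
        A * Ainv = 1\<^sub>m (n-1) \<and> Ainv * A = 1\<^sub>m (n-1) \<and>
        i \<in> SO2minus e \<and>
        B \<in> carrier_mat (n-1) (n-1) \<and> h \<in> carrier_mat 2 (n-1) \<and>
        transpose_mat B + B + transpose_mat h * delta_eps e * h = 0\<^sub>m (n-1) (n-1)}"

definition rho_mat :: "nat \<Rightarrow> 'a::field mat" where
  "rho_mat n = mat (2*n) (2*n) (\<lambda>(i,j). if i = j then (if i = 2*n - 1 then -1 else 1) else 0)"

(* sigma_r: swaps the first r basis vectors of block 0 with the first r of block 1 *)
definition sigma_perm :: "nat \<Rightarrow> nat \<Rightarrow> nat \<Rightarrow> nat" where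
  "sigma_perm n r i = (if i < r then i + (n-1)
                        else if n-1 \<le> i \<and> i < n-1+r then i - (n-1) else i)"

definition sigma_mat :: "nat \<Rightarrow> nat \<Rightarrow> 'a::field mat" where
  "sigma_mat n r = mat (2*n) (2*n) (\<lambda>(i,j). if j = sigma_perm n r i then 1 else 0)"

definition dcoset :: "nat \<Rightarrow> 'a::field \<Rightarrow> nat \<Rightarrow> 'a mat set" where
  "dcoset n e r = {x * sigma_mat n r * y | x y. x \<in> Qgrp n e \<and> y \<in> Qgrp n e}"

definition rho_dcoset :: "nat \<Rightarrow> 'a::field \<Rightarrow> nat \<Rightarrow> 'a mat set" where
  "rho_dcoset n e r = {rho_mat n * x * sigma_mat n r * y | x y. x \<in> Qgrp n e \<and> y \<in> Qgrp n e}"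

(* DC_i^{\pm}(n,q); the sign is + for n even and - for n odd, so it is determined by n *)
definition DC :: "nat \<Rightarrow> nat \<Rightarrow> 'a::field \<Rightarrow> 'a mat set" where
  "DC i n e = (if i = 1 then dcoset n e (n-1)
               else if i = 2 then dcoset n e (n-2)
               else if i = 3 then rho_dcoset n e (n-2)
               else rho_dcoset n e (n-3))"

definition codeword :: "nat \<Rightarrow> 'a::field mat list \<Rightarrow> 'a \<Rightarrow> 'a list" where
  "codeword s gs a = map (\<lambda>g. abs_tr s (a * mtrace g)) gs"

end

theory Submission
  imports Defs "HOL-Computational_Algebra.Polynomial"
begin

(* If c(a) = c(b) with a ~= b, then every trace value
   t in T = Tr(D) satisfies tr((a-b) t) = 0.  The map t |-> tr(c t) is a nonzero polynomial
   of degree 3^(s-1), so it has at most q/3 roots; hence the map is injective as soon as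
   3 |T| > q.  It therefore suffices to exhibit, inside each D, a one-parameter family of
   elements whose traces are two-to-one in the parameter:
     (E1) for sigma_r, r >= 1 (with or without rho): unipotent elements x of Q give
          traces u^2 + const;
     (E2) for sigma_0 (n = 1, 2): Levi elements diag(1,1,I(t)) with I(t) in SO^-(2,q) given
          by the Cayley parametrisation give traces const + 2 (t^2+e)/(t^2-e);
     (E3) for rho sigma_0 (n = 2, 3): Levi elements diag(a, a^-1, 1) give traces
          m (a + 1/a), where m = n - 1 is nonzero in F_q. *)


section \<open>Finite fields of characteristic 3 and the absolute trace\<close>

(* A field with 3^s elements has characteristic 3: the sum of all elements is invariant under
   translation by 1, so q * 1 = 0. *)
lemma char3_of_card:
  assumes q: "card (UNIV :: 'a::{finite,field} set) = 3 ^ s"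
  shows "(3::'a) = 0"
proof -
  have b: "bij_betw (\<lambda>x::'a. x + 1) UNIV UNIV"
    unfolding bij_betw_def inj_on_def by (auto intro!: image_eqI[where x="_ - 1"])
  have "(\<Sum>x\<in>UNIV. x + (1::'a)) = (\<Sum>x\<in>UNIV. x)"
    using sum.reindex_bij_betw[OF b, of "\<lambda>x. x"] by simp
  hence "of_nat (card (UNIV::'a set)) = (0::'a)" by (simp add: sum.distrib)
  hence "(of_nat 3 :: 'a) ^ s = 0" using q by (metis of_nat_power)
  thus ?thesis by simp
qed

lemma two_neq_zero_char3: "(3::'a::field) = 0 \<Longrightarrow> (2::'a) \<noteq> 0"
proof
  assume "(3::'a) = 0" "(2::'a) = 0"
  moreover have "(3::'a) = 2 + 1" by simp
  ultimately show False by simp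
qed

lemma frobenius_add:
  assumes "(3::'a::field) = 0"
  shows "(x + y :: 'a) ^ (3 ^ k) = x ^ (3^k) + y ^ (3^k)"
proof (induction k)
  case 0 then show ?case by simp
next
  case (Suc k)
  have cube: "(X + Y :: 'a) ^ 3 = X^3 + Y^3" for X Y
  proof -
    have "(X + Y :: 'a) ^ 3 = X^3 + Y^3 + 3*(X^2*Y + X*Y^2)"
      by (simp add: algebra_simps power2_eq_square power3_eq_cube)
    thus ?thesis using assms by simp
  qed
  have "(x + y) ^ (3 ^ Suc k) = ((x+y)^(3^k))^3" by (simp add: power_mult[symmetric] mult.commute)
  also have "\<dots> = (x^(3^k))^3 + (y^(3^k))^3" using Suc cube by simp
  also have "\<dots> = x ^ (3^Suc k) + y ^ (3^Suc k)" by (simp add: power_mult[symmetric] mult.commute)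
  finally show ?case .
qed

lemma abs_tr_add:
  assumes "(3::'a::field) = 0"
  shows "abs_tr s (x + y :: 'a) = abs_tr s x + abs_tr s y"
  unfolding abs_tr_def using frobenius_add[OF assms] by (simp add: sum.distrib)

(* For c ~= 0 the map t |-> tr(c t) is a nonzero polynomial of degree 3^(s-1) (its leading
   coefficient is c^(3^(s-1))), so its kernel has at most 3^(s-1) elements. *)
lemma abs_tr_kernel_card:
  assumes c: "(c::'a::field) \<noteq> 0" and s: "s \<ge> 1"
  shows "card {t. abs_tr s (c*t) = 0} \<le> 3^(s-1)"
proof -
  define p where "p = (\<Sum>i<s. monom (c^(3^i)) (3^i))"
  have ev: "poly p t = abs_tr s (c*t)" for t
    unfolding p_def abs_tr_def poly_sum poly_monom by (simp add: power_mult_distrib)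
  have "coeff p (3^(s-1)) = (\<Sum>i<s. if 3^i = (3::nat)^(s-1) then c^(3^i) else 0)"
    unfolding p_def coeff_sum by simp
  also have "\<dots> = (\<Sum>i<s. if i = s-1 then c^(3^i) else 0)"
    by (rule sum.cong, auto)
  also have "\<dots> = c^(3^(s-1))" using s by simp
  finally have "coeff p (3^(s-1)) \<noteq> 0" using c by simp
  hence p0: "p \<noteq> 0" by auto
  have "degree p \<le> 3^(s-1)" unfolding p_def
  proof (rule degree_sum_le)
    fix i assume "i \<in> {..<s}"
    hence "(3::nat)^i \<le> 3^(s-1)" by (intro power_increasing) auto
    thus "degree (monom (c ^ 3 ^ i) (3 ^ i)) \<le> 3 ^ (s - 1)" using degree_monom_le order_trans by blast
  qed simp
  moreover have "card {t. poly p t = 0} \<le> degree p" by (rule card_poly_roots_bound[OF p0])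
  ultimately show ?thesis unfolding ev by simp
qed

lemma codeword_inj_of_many_traces:
  fixes gs :: "'a::{finite,field} mat list"
  assumes q: "card (UNIV :: 'a set) = 3 ^ s"
    and many: "card (UNIV::'a set) < 3 * card (mtrace ` set gs)"
  shows "inj (codeword s gs)"
proof (rule injI)
  have three: "(3::'a) = 0" by (rule char3_of_card[OF q])
  have s: "s \<ge> 1"
  proof (rule ccontr)
    assume "\<not> s \<ge> 1" hence "card (UNIV::'a set) = 1" using q by simp
    then obtain z where "(UNIV::'a set) = {z}" using card_1_singletonE by blast
    thus False by (metis UNIV_I singletonD zero_neq_one)
  qed
  fix a b assume eq: "codeword s gs a = codeword s gs b"
  show "a = b"
  proof (rule ccontr)
    assume ab: "a \<noteq> b"
    have "mtrace ` set gs \<subseteq> {t. abs_tr s ((a - b) * t) = 0}"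
    proof
      fix x assume "x \<in> mtrace ` set gs"
      then obtain g where g: "g \<in> set gs" "x = mtrace g" by auto
      have "abs_tr s (a * x) = abs_tr s (b * x)"
        using eq g unfolding codeword_def by (simp add: map_eq_conv)
      moreover have "abs_tr s (a * x) = abs_tr s ((a - b) * x) + abs_tr s (b * x)"
        using abs_tr_add[OF three, of s "(a-b)*x" "b*x"] by (simp add: algebra_simps)
      ultimately show "x \<in> {t. abs_tr s ((a - b) * t) = 0}" by simp
    qed
    hence "card (mtrace ` set gs) \<le> card {t. abs_tr s ((a - b) * t) = 0}" by (intro card_mono) auto
    also have "\<dots> \<le> 3^(s-1)" using abs_tr_kernel_card[of "a-b" s] ab s by simp
    finally have "3 * card (mtrace ` set gs) \<le> 3 * 3^(s-1)" by simp
    also have "\<dots> = 3^s" using s by (cases s) auto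
    finally show False using many q by simp
  qed
qed


section \<open>Counting values of maps with fibres of size at most two\<close>

lemma card_le_twice_image:
  assumes fin: "finite S"
    and fib: "\<And>x y. x \<in> S \<Longrightarrow> y \<in> S \<Longrightarrow> f x = f y \<Longrightarrow> y = x \<or> y = g x"
  shows "card S \<le> 2 * card (f ` S)"
proof -
  have "S = (\<Union>z\<in>f ` S. {x\<in>S. f x = z})" by auto
  hence "card S \<le> (\<Sum>z\<in>f ` S. card {x\<in>S. f x = z})" by (metis card_UN_le fin finite_imageI)
  also have "\<dots> \<le> (\<Sum>z\<in>f ` S. 2)"
  proof (rule sum_mono)
    fix z assume "z \<in> f ` S"
    then obtain x where x: "x \<in> S" "z = f x" by auto
    have "{y\<in>S. f y = z} \<subseteq> {x, g x}" using fib[of x] x by force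
    hence "card {y\<in>S. f y = z} \<le> card {x, g x}" by (intro card_mono) auto
    also have "\<dots> \<le> 2" by (simp add: card_insert_le_m1)
    finally show "card {y\<in>S. f y = z} \<le> 2" .
  qed
  finally show ?thesis by simp
qed

lemma card_UNIV_lt_three_card:
  fixes f :: "'a::finite \<Rightarrow> 'b" and g :: "'a \<Rightarrow> 'a"
  assumes sub: "f ` S \<subseteq> T" and finT: "finite T"
    and fib: "\<And>x y. x \<in> S \<Longrightarrow> y \<in> S \<Longrightarrow> f x = f y \<Longrightarrow> y = x \<or> y = g x"
    and q: "card (UNIV::'a set) \<le> card S + k" and k: "k < card T"
  shows "card (UNIV::'a set) < 3 * card T"
proof -
  have "card S \<le> 2 * card (f ` S)" by (rule card_le_twice_image[OF _ fib]) auto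
  also have "card (f ` S) \<le> card T" by (rule card_mono[OF finT sub])
  finally show ?thesis using q k by linarith
qed

lemma card_UNIV_lt_three_card_squares:
  fixes K :: "'a::{finite,field}"
  assumes sub: "(\<lambda>u. u*u + K) ` UNIV \<subseteq> T"
  shows "card (UNIV::'a set) < 3 * card T"
proof (rule card_UNIV_lt_three_card[OF sub finite, where g=uminus and k=0])
  show "x * x + K = y * y + K \<Longrightarrow> y = x \<or> y = - x" for x y :: 'a
    by (metis add_right_cancel square_eq_iff)
  show "0 < card T" using sub by (auto simp: card_gt_0_iff)
qed simp


section \<open>Block matrices and the parabolic subgroup Q\<close>

lemma blk3_carrier[simp]: "blk3 m M \<in> carrier_mat (2 * Suc m) (2 * Suc m)"
  unfolding blk3_def by simp

lemma blk3_dims[simp]: "dim_row (blk3 m M) = 2 * Suc m" "dim_col (blk3 m M) = 2 * Suc m"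
  unfolding blk3_def by simp_all

lemma blk3_index: "i < 2 * Suc m \<Longrightarrow> j < 2 * Suc m \<Longrightarrow>
   blk3 m M $$ (i,j) = M (bidx m i) (bidx m j) $$ (i - boff m (bidx m i), j - boff m (bidx m j))"
  unfolding blk3_def by simp

lemma blk3_eq_one:
  assumes "\<And>b c i j. b < 3 \<Longrightarrow> c < 3 \<Longrightarrow> i < (if b = 2 then 2 else m) \<Longrightarrow> j < (if c = 2 then 2 else m)
     \<Longrightarrow> M b c $$ (i,j) = (if b = c \<and> i = j then 1 else 0)"
  shows "blk3 m M = 1\<^sub>m (2 * Suc m)"
proof (rule eq_matI)
  fix i j assume "i < dim_row (1\<^sub>m (2 * Suc m))" "j < dim_col (1\<^sub>m (2 * Suc m))"
  hence ij: "i < 2 * Suc m" "j < 2 * Suc m" by auto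
  have "M (bidx m i) (bidx m j) $$ (i - boff m (bidx m i), j - boff m (bidx m j)) =
     (if bidx m i = bidx m j \<and> i - boff m (bidx m i) = j - boff m (bidx m j) then 1 else 0)"
    by (rule assms) (use ij in \<open>auto simp: bidx_def boff_def\<close>)
  also have "\<dots> = (if i = j then 1 else 0)"
    using ij by (auto simp: bidx_def boff_def)
  finally show "blk3 m M $$ (i, j) = 1\<^sub>m (2 * Suc m) $$ (i, j)"
    using ij by (simp add: blk3_index)
qed auto

definition levi_blocks :: "nat \<Rightarrow> 'a::field mat \<Rightarrow> 'a mat \<Rightarrow> 'a mat \<Rightarrow> nat \<Rightarrow> nat \<Rightarrow> 'a mat" where
  "levi_blocks m A Ainv i = (\<lambda>b c.
          if b = 0 \<and> c = 0 then A
          else if b = 1 \<and> c = 1 then transpose_mat Ainv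
          else if b = 2 \<and> c = 2 then i
          else 0\<^sub>m (if b = 2 then 2 else m) (if c = 2 then 2 else m))"

definition unip_blocks :: "nat \<Rightarrow> 'a::field \<Rightarrow> 'a mat \<Rightarrow> 'a mat \<Rightarrow> nat \<Rightarrow> nat \<Rightarrow> 'a mat" where
  "unip_blocks m e B h = (\<lambda>b c.
          if b = 0 \<and> c = 0 then 1\<^sub>m m
          else if b = 0 \<and> c = 1 then B
          else if b = 0 \<and> c = 2 then - (transpose_mat h * delta_eps e)
          else if b = 1 \<and> c = 1 then 1\<^sub>m m
          else if b = 2 \<and> c = 1 then h
          else if b = 2 \<and> c = 2 then 1\<^sub>m 2
          else 0\<^sub>m (if b = 2 then 2 else m) (if c = 2 then 2 else m))"

lemma Qgrp_intro:
  assumes "A \<in> carrier_mat m m" "Ainv \<in> carrier_mat m m"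
    "A * Ainv = 1\<^sub>m m" "Ainv * A = 1\<^sub>m m" "i \<in> SO2minus e"
    "B \<in> carrier_mat m m" "h \<in> carrier_mat 2 m"
    "transpose_mat B + B + transpose_mat h * delta_eps e * h = 0\<^sub>m m m"
  shows "blk3 m (levi_blocks m A Ainv i) * blk3 m (unip_blocks m e B h) \<in> Qgrp (Suc m) e"
  unfolding Qgrp_def levi_blocks_def unip_blocks_def diff_Suc_1 using assms by blast

lemma delta_eps_carrier[simp]: "delta_eps e \<in> carrier_mat 2 2"
  unfolding delta_eps_def by simp

lemma delta_eps_dims[simp]: "dim_row (delta_eps e) = 2" "dim_col (delta_eps e) = 2"
  unfolding delta_eps_def by simp_all

lemma delta_eps_index[simp]: "delta_eps e $$ (0,0) = 1" "delta_eps e $$ (1,1) = - e"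
  "delta_eps e $$ (0,1) = 0" "delta_eps e $$ (1,0) = 0"
  "delta_eps e $$ (Suc 0,Suc 0) = - e" "delta_eps e $$ (0,Suc 0) = 0" "delta_eps e $$ (Suc 0,0) = 0"
  unfolding delta_eps_def by simp_all

lemma one_SO2minus: "1\<^sub>m 2 \<in> SO2minus e"
  unfolding SO2minus_def using delta_eps_carrier[of e] by simp

lemma levi_blocks_one: "blk3 m (levi_blocks m (1\<^sub>m m) (1\<^sub>m m) (1\<^sub>m 2)) = 1\<^sub>m (2 * Suc m)"
  by (rule blk3_eq_one) (auto simp: levi_blocks_def)

lemma unip_blocks_zero: "blk3 m (unip_blocks m e (0\<^sub>m m m) (0\<^sub>m 2 m)) = 1\<^sub>m (2 * Suc m)"
  by (rule blk3_eq_one) (auto simp: unip_blocks_def delta_eps_def)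

lemma levi_in_Qgrp:
  assumes "A \<in> carrier_mat m m" "Ainv \<in> carrier_mat m m"
    "A * Ainv = 1\<^sub>m m" "Ainv * A = 1\<^sub>m m" "i \<in> SO2minus e"
  shows "blk3 m (levi_blocks m A Ainv i) \<in> Qgrp (Suc m) e"
proof -
  have "blk3 m (levi_blocks m A Ainv i) * blk3 m (unip_blocks m e (0\<^sub>m m m) (0\<^sub>m 2 m)) \<in> Qgrp (Suc m) e"
    by (rule Qgrp_intro)
      (use assms in \<open>auto simp: right_mult_zero_mat[OF delta_eps_carrier] left_mult_zero_mat\<close>)
  thus ?thesis unfolding unip_blocks_zero by simp
qed

lemma unip_in_Qgrp:
  assumes "B \<in> carrier_mat m m" "h \<in> carrier_mat 2 m"
    "transpose_mat B + B + transpose_mat h * delta_eps e * h = 0\<^sub>m m m"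
  shows "blk3 m (unip_blocks m e B h) \<in> Qgrp (Suc m) e"
proof -
  have "blk3 m (levi_blocks m (1\<^sub>m m) (1\<^sub>m m) (1\<^sub>m 2)) * blk3 m (unip_blocks m e B h) \<in> Qgrp (Suc m) e"
    by (rule Qgrp_intro) (use assms one_SO2minus in auto)
  thus ?thesis unfolding levi_blocks_one left_mult_one_mat[OF blk3_carrier] .
qed

lemma one_in_Qgrp: "1\<^sub>m (2 * Suc m) \<in> Qgrp (Suc m) (e::'a::field)"
proof -
  have "blk3 m (levi_blocks m (1\<^sub>m m) (1\<^sub>m m) (1\<^sub>m 2)) \<in> Qgrp (Suc m) e"
    by (rule levi_in_Qgrp) (auto simp: one_SO2minus)
  thus ?thesis unfolding levi_blocks_one .
qed

lemma sigma_carrier: "sigma_mat n r \<in> carrier_mat (2*n) (2*n)"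
  unfolding sigma_mat_def by simp

lemma sigma_dims[simp]: "dim_row (sigma_mat n r) = 2*n" "dim_col (sigma_mat n r) = 2*n"
  unfolding sigma_mat_def by simp_all

lemma rho_dims[simp]: "dim_row (rho_mat n) = 2*n" "dim_col (rho_mat n) = 2*n"
  unfolding rho_mat_def by simp_all

lemma rho_carrier: "rho_mat n \<in> carrier_mat (2*n) (2*n)"
  unfolding rho_mat_def by simp

(* Taking y = 1 in the double coset: x sigma_r and rho x sigma_r lie in D for every x in Q. *)
lemma mult_sigma_in_dcoset:
  assumes x: "x \<in> Qgrp (Suc m) e" and c: "x \<in> carrier_mat (2 * Suc m) (2 * Suc m)"
  shows "x * sigma_mat (Suc m) r \<in> dcoset (Suc m) e r"
proof -
  have mem: "x * sigma_mat (Suc m) r * 1\<^sub>m (2 * Suc m) \<in> dcoset (Suc m) e r"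
    unfolding dcoset_def using x one_in_Qgrp by blast
  have c': "x * sigma_mat (Suc m) r \<in> carrier_mat (2 * Suc m) (2 * Suc m)"
    using c sigma_carrier by (rule mult_carrier_mat)
  from mem show ?thesis unfolding right_mult_one_mat[OF c'] .
qed

lemma rho_mult_sigma_in_rho_dcoset:
  assumes x: "x \<in> Qgrp (Suc m) e" and c: "x \<in> carrier_mat (2 * Suc m) (2 * Suc m)"
  shows "rho_mat (Suc m) * x * sigma_mat (Suc m) r \<in> rho_dcoset (Suc m) e r"
proof -
  have mem: "rho_mat (Suc m) * x * sigma_mat (Suc m) r * 1\<^sub>m (2 * Suc m) \<in> rho_dcoset (Suc m) e r"
    unfolding rho_dcoset_def using x one_in_Qgrp by blast
  have c': "rho_mat (Suc m) * x * sigma_mat (Suc m) r \<in> carrier_mat (2 * Suc m) (2 * Suc m)"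
    using mult_carrier_mat[OF rho_carrier c] sigma_carrier by (rule mult_carrier_mat)
  from mem show ?thesis unfolding right_mult_one_mat[OF c'] .
qed


section \<open>Traces of x sigma_r and rho x sigma_r\<close>

lemma sigma_perm_involution: "r \<le> m \<Longrightarrow> sigma_perm (Suc m) r (sigma_perm (Suc m) r j) = j"
  unfolding sigma_perm_def by auto

lemma sigma_perm_less: "r \<le> m \<Longrightarrow> j < 2 * Suc m \<Longrightarrow> sigma_perm (Suc m) r j < 2 * Suc m"
  unfolding sigma_perm_def by auto

lemma sigma_index: "k < 2*n \<Longrightarrow> j < 2*n \<Longrightarrow> sigma_mat n r $$ (k,j) = (if j = sigma_perm n r k then 1 else 0)"
  unfolding sigma_mat_def by simp

(* sigma_r is the permutation matrix of an involution, so Tr(X sigma_r) picks the entries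
   X(j, sigma_r j). *)
lemma mtrace_mult_sigma:
  fixes X :: "'a::field mat"
  assumes X: "X \<in> carrier_mat (2 * Suc m) (2 * Suc m)" and r: "r \<le> m"
  shows "mtrace (X * sigma_mat (Suc m) r) = (\<Sum>j<2 * Suc m. X $$ (j, sigma_perm (Suc m) r j))"
  unfolding mtrace_def
proof (rule sum.cong)
  fix j assume "j \<in> {..<2 * Suc m}"
  hence j: "j < 2 * Suc m" by simp
  have "(X * sigma_mat (Suc m) r) $$ (j, j)
      = (\<Sum>k\<in>{0..<2 * Suc m}. X $$ (j,k) * sigma_mat (Suc m) r $$ (k,j))"
    using X j by (simp only: index_mult_mat scalar_prod_def sigma_dims carrier_matD index_row index_col) simp
  also have "\<dots> = (\<Sum>k\<in>{0..<2 * Suc m}. if k = sigma_perm (Suc m) r j then X $$ (j,k) else 0)"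
  proof (rule sum.cong[OF refl])
    fix k assume "k \<in> {0..<2 * Suc m}"
    hence k: "k < 2 * Suc m" by simp
    have "(j = sigma_perm (Suc m) r k) = (k = sigma_perm (Suc m) r j)"
      using sigma_perm_involution[OF r, of j] sigma_perm_involution[OF r, of k] by metis
    thus "X $$ (j,k) * sigma_mat (Suc m) r $$ (k,j) = (if k = sigma_perm (Suc m) r j then X $$ (j,k) else 0)"
      unfolding sigma_index[OF k j, of r] by simp
  qed
  also have "\<dots> = X $$ (j, sigma_perm (Suc m) r j)"
    using sigma_perm_less[OF r j] by (simp only: sum.delta finite_atLeastLessThan) simp
  finally show "(X * sigma_mat (Suc m) r) $$ (j, j) = X $$ (j, sigma_perm (Suc m) r j)" .
qed (use X in simp)

lemma rho_mult_index:
  fixes X :: "'a::field mat"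
  assumes X: "X \<in> carrier_mat (2 * n) (2 * n)" and j: "j < 2*n" and k: "k < 2*n"
  shows "(rho_mat n * X) $$ (j,k) = (if j = 2*n - 1 then -1 else 1) * X $$ (j,k)"
proof -
  have "(rho_mat n * X) $$ (j,k) = (\<Sum>l\<in>{0..<2*n}. rho_mat n $$ (j,l) * X $$ (l,k))"
    using X j k by (simp only: index_mult_mat scalar_prod_def rho_dims carrier_matD index_row index_col) simp
  also have "\<dots> = (\<Sum>l\<in>{0..<2*n}. if l = j then (if j = 2*n - 1 then -1 else 1) * X $$ (l,k) else 0)"
    by (rule sum.cong[OF refl]) (use j in \<open>auto simp: rho_mat_def\<close>)
  also have "\<dots> = (if j = 2*n - 1 then -1 else 1) * X $$ (j,k)" using j
    by (simp only: sum.delta finite_atLeastLessThan) simp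
  finally show ?thesis .
qed

lemma sum_block_ranges:
  fixes f :: "nat \<Rightarrow> 'a::comm_monoid_add"
  assumes r: "r \<le> m"
  shows "(\<Sum>j<2 * Suc m. f j) = (\<Sum>j<r. f j) + (\<Sum>j\<in>{r..<m}. f j) + (\<Sum>j<r. f (m + j))
      + (\<Sum>j\<in>{r..<m}. f (m + j)) + f (2*m) + f (2*m+1)"
proof -
  have a: "(\<Sum>j<2 * Suc m. f j) = (\<Sum>j<m+m. f j) + f (2*m) + f (2*m+1)"
    by (simp add: mult_2)
  have b: "(\<Sum>j<m+m. f j) = (\<Sum>j<m. f j) + (\<Sum>j<m. f (m + j))"
  proof -
    have "(\<Sum>j<m+m. f j) = (\<Sum>j\<in>{0..<m}. f j) + (\<Sum>j\<in>{m..<m+m}. f j)"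
      by (simp add: sum.atLeastLessThan_concat atLeast0LessThan[symmetric])
    also have "(\<Sum>j\<in>{m..<m+m}. f j) = (\<Sum>j\<in>{0..<m}. f (j + m))"
      using sum.shift_bounds_nat_ivl[of f 0 m m] by simp
    finally show ?thesis by (simp add: atLeast0LessThan add.commute)
  qed
  have c: "(\<Sum>j<m. g j) = (\<Sum>j<r. g j) + (\<Sum>j\<in>{r..<m}. g j)" for g :: "nat \<Rightarrow> 'a"
    using sum.atLeastLessThan_concat[of 0 r m g] r by (simp add: atLeast0LessThan)
  show ?thesis unfolding a b c[of f] c[of "\<lambda>j. f (m+j)"] by (simp add: ac_simps)
qed

lemma blk3_sigma_entries:
  assumes r: "r \<le> m"
  shows "j < r \<Longrightarrow> blk3 m M $$ (j, sigma_perm (Suc m) r j) = M 0 1 $$ (j,j)"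
    and "r \<le> j \<Longrightarrow> j < m \<Longrightarrow> blk3 m M $$ (j, sigma_perm (Suc m) r j) = M 0 0 $$ (j,j)"
    and "j < r \<Longrightarrow> blk3 m M $$ (m+j, sigma_perm (Suc m) r (m+j)) = M 1 0 $$ (j,j)"
    and "r \<le> j \<Longrightarrow> j < m \<Longrightarrow> blk3 m M $$ (m+j, sigma_perm (Suc m) r (m+j)) = M 1 1 $$ (j,j)"
    and "blk3 m M $$ (2*m, sigma_perm (Suc m) r (2*m)) = M 2 2 $$ (0,0)"
    and "blk3 m M $$ (Suc (2*m), sigma_perm (Suc m) r (Suc (2*m))) = M 2 2 $$ (1,1)"
proof -
  have b: "bidx m (2*m) = 2" "bidx m (Suc (2*m)) = 2" "boff m 2 = 2*m"
    "boff m 0 = 0" "boff m (Suc 0) = m"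
    unfolding bidx_def boff_def by auto
  show "blk3 m M $$ (j, sigma_perm (Suc m) r j) = M 0 1 $$ (j,j)" if j: "j < r"
  proof -
    have "sigma_perm (Suc m) r j = j + m" "bidx m j = 0" "bidx m (j+m) = Suc 0"
      using j r unfolding sigma_perm_def bidx_def by auto
    thus ?thesis using j r b by (subst blk3_index) simp_all
  qed
  show "blk3 m M $$ (j, sigma_perm (Suc m) r j) = M 0 0 $$ (j,j)" if j: "r \<le> j" "j < m"
  proof -
    have "sigma_perm (Suc m) r j = j" "bidx m j = 0"
      using j unfolding sigma_perm_def bidx_def by auto
    thus ?thesis using j b by (subst blk3_index) simp_all
  qed
  show "blk3 m M $$ (m+j, sigma_perm (Suc m) r (m+j)) = M 1 0 $$ (j,j)" if j: "j < r"
  proof -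
    have "sigma_perm (Suc m) r (m+j) = j" "bidx m j = 0" "bidx m (m+j) = Suc 0"
      using j r unfolding sigma_perm_def bidx_def by auto
    thus ?thesis using j r b by (subst blk3_index) simp_all
  qed
  show "blk3 m M $$ (m+j, sigma_perm (Suc m) r (m+j)) = M 1 1 $$ (j,j)" if j: "r \<le> j" "j < m"
  proof -
    have "sigma_perm (Suc m) r (m+j) = m+j" "bidx m (m+j) = Suc 0"
      using j r unfolding sigma_perm_def bidx_def by auto
    thus ?thesis using j b by (subst blk3_index) simp_all
  qed
  show "blk3 m M $$ (2*m, sigma_perm (Suc m) r (2*m)) = M 2 2 $$ (0,0)"
  proof -
    have "sigma_perm (Suc m) r (2*m) = 2*m" using r unfolding sigma_perm_def by simp
    thus ?thesis using b by (subst blk3_index) simp_all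
  qed
  show "blk3 m M $$ (Suc (2*m), sigma_perm (Suc m) r (Suc (2*m))) = M 2 2 $$ (1,1)"
  proof -
    have s: "sigma_perm (Suc m) r (Suc (2*m)) = Suc (2*m)" using r unfolding sigma_perm_def by simp
    show ?thesis unfolding s by (subst blk3_index) (simp_all add: b)
  qed
qed

lemma mtrace_blk3_sigma:
  fixes M :: "nat \<Rightarrow> nat \<Rightarrow> 'a::field mat"
  assumes r: "r \<le> m"
  shows "mtrace (blk3 m M * sigma_mat (Suc m) r) =
    (\<Sum>j<r. M 0 1 $$ (j,j)) + (\<Sum>j\<in>{r..<m}. M 0 0 $$ (j,j)) + (\<Sum>j<r. M 1 0 $$ (j,j))
      + (\<Sum>j\<in>{r..<m}. M 1 1 $$ (j,j)) + M 2 2 $$ (0,0) + M 2 2 $$ (1,1)"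
  unfolding mtrace_mult_sigma[OF blk3_carrier r] sum_block_ranges[OF r]
  by (simp add: blk3_sigma_entries[OF r])

lemma mtrace_rho_blk3_sigma:
  fixes M :: "nat \<Rightarrow> nat \<Rightarrow> 'a::field mat"
  assumes r: "r \<le> m"
  shows "mtrace (rho_mat (Suc m) * blk3 m M * sigma_mat (Suc m) r) =
    (\<Sum>j<r. M 0 1 $$ (j,j)) + (\<Sum>j\<in>{r..<m}. M 0 0 $$ (j,j)) + (\<Sum>j<r. M 1 0 $$ (j,j))
      + (\<Sum>j\<in>{r..<m}. M 1 1 $$ (j,j)) + M 2 2 $$ (0,0) - M 2 2 $$ (1,1)"
proof -
  have RX: "rho_mat (Suc m) * blk3 m M \<in> carrier_mat (2 * Suc m) (2 * Suc m)"
    by (rule mult_carrier_mat[OF rho_carrier blk3_carrier])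
  have "mtrace (rho_mat (Suc m) * blk3 m M * sigma_mat (Suc m) r) =
     (\<Sum>j<2 * Suc m. (if j = 2 * Suc m - 1 then -1 else 1) * blk3 m M $$ (j, sigma_perm (Suc m) r j))"
    unfolding mtrace_mult_sigma[OF RX r]
    by (rule sum.cong[OF refl], rule rho_mult_index[OF blk3_carrier], simp, rule sigma_perm_less[OF r], simp)
  also have "\<dots> = (\<Sum>j<r. M 0 1 $$ (j,j)) + (\<Sum>j\<in>{r..<m}. M 0 0 $$ (j,j)) + (\<Sum>j<r. M 1 0 $$ (j,j))
      + (\<Sum>j\<in>{r..<m}. M 1 1 $$ (j,j)) + M 2 2 $$ (0,0) - M 2 2 $$ (1,1)"
    unfolding sum_block_ranges[OF r] using r by (simp add: blk3_sigma_entries[OF r])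
  finally show ?thesis .
qed


section \<open>(E1) Unipotent elements: traces u^2 + const for sigma_r, r >= 1\<close>

(* B = u^2 E_11 and h = u e_1 satisfy B^t + B + h^t delta h = 3 u^2 E_11 = 0. *)
definition corner_sq :: "nat \<Rightarrow> 'a::field \<Rightarrow> 'a mat" where
  "corner_sq m u = mat m m (\<lambda>(i,j). if i = 0 \<and> j = 0 then u*u else 0)"

definition corner_vec :: "nat \<Rightarrow> 'a::field \<Rightarrow> 'a mat" where
  "corner_vec m u = mat 2 m (\<lambda>(i,j). if i = 0 \<and> j = 0 then u else 0)"

lemma corner_unip_in_Qgrp:
  fixes e u :: "'a::field"
  assumes three: "(3::'a) = 0"
  shows "blk3 m (unip_blocks m e (corner_sq m u) (corner_vec m u)) \<in> Qgrp (Suc m) e"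
proof (rule unip_in_Qgrp)
  let ?B = "corner_sq m u" and ?h = "corner_vec m u"
  show "transpose_mat ?B + ?B + transpose_mat ?h * delta_eps e * ?h = 0\<^sub>m m m"
  proof (rule eq_matI)
    fix i j assume "i < dim_row (0\<^sub>m m m :: 'a mat)" "j < dim_col (0\<^sub>m m m :: 'a mat)"
    hence ij: "i < m" "j < m" by auto
    have hd: "(transpose_mat ?h * delta_eps e) $$ (i,k) = (if i = 0 \<and> k = 0 then u else 0)" if k: "k < 2" for k
      using ij k unfolding corner_vec_def by (auto simp: scalar_prod_def delta_eps_def numeral_2_eq_2)
    have "(transpose_mat ?h * delta_eps e * ?h) $$ (i,j) = (if i = 0 \<and> j = 0 then u*u else 0)"
      using ij by (auto simp: scalar_prod_def hd numeral_2_eq_2 corner_vec_def)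
    moreover have "3 * (u*u) = 0" using three by simp
    ultimately show "(transpose_mat ?B + ?B + transpose_mat ?h * delta_eps e * ?h) $$ (i, j) = 0\<^sub>m m m $$ (i, j)"
      using ij unfolding corner_sq_def by (auto simp: corner_vec_def algebra_simps)
  qed (auto simp: corner_vec_def corner_sq_def)
qed (auto simp: corner_sq_def corner_vec_def)

lemma mtrace_corner_unip:
  fixes e u :: "'a::field"
  assumes r: "1 \<le> r" "r \<le> m"
  defines "X \<equiv> blk3 m (unip_blocks m e (corner_sq m u) (corner_vec m u))"
  shows "mtrace (X * sigma_mat (Suc m) r) = u*u + (of_nat (m-r) + of_nat (m-r) + 2)"
    and "mtrace (rho_mat (Suc m) * X * sigma_mat (Suc m) r) = u*u + (of_nat (m-r) + of_nat (m-r))"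
proof -
  let ?U = "unip_blocks m e (corner_sq m u) (corner_vec m u)"
  have s1: "(\<Sum>j<r. ?U 0 1 $$ (j,j)) = u*u"
  proof -
    have "(\<Sum>j<r. ?U 0 1 $$ (j,j)) = (\<Sum>j<r. if j = 0 then u*u else 0)"
      by (rule sum.cong[OF refl]) (use r in \<open>auto simp: unip_blocks_def corner_sq_def\<close>)
    also have "\<dots> = u*u" using r by (simp only: sum.delta finite_lessThan) simp
    finally show ?thesis .
  qed
  have s2: "(\<Sum>j\<in>{r..<m}. ?U 0 0 $$ (j,j)) = of_nat (m-r)"
    by (subst sum.cong[OF refl, where h="\<lambda>_. 1"]) (auto simp: unip_blocks_def)
  have s3: "(\<Sum>j<r. ?U 1 0 $$ (j,j)) = 0"
    by (subst sum.cong[OF refl, where h="\<lambda>_. 0"]) (use r in \<open>auto simp: unip_blocks_def\<close>)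
  have s4: "(\<Sum>j\<in>{r..<m}. ?U 1 1 $$ (j,j)) = of_nat (m-r)"
    by (subst sum.cong[OF refl, where h="\<lambda>_. 1"]) (auto simp: unip_blocks_def)
  have s5: "?U 2 2 $$ (0,0) = 1" "?U 2 2 $$ (1,1) = 1" by (auto simp: unip_blocks_def)
  show "mtrace (X * sigma_mat (Suc m) r) = u*u + (of_nat (m-r) + of_nat (m-r) + 2)"
    unfolding X_def mtrace_blk3_sigma[OF r(2)] s1 s2 s3 s4 s5 by simp
  show "mtrace (rho_mat (Suc m) * X * sigma_mat (Suc m) r) = u*u + (of_nat (m-r) + of_nat (m-r))"
    unfolding X_def mtrace_rho_blk3_sigma[OF r(2)] s1 s2 s3 s4 s5 by simp
qed

lemma many_traces_sigma_pos:
  fixes e :: "'a::{finite,field}"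
  assumes three: "(3::'a) = 0" and r: "1 \<le> r" "r \<le> m"
  shows "card (UNIV::'a set) < 3 * card (mtrace ` dcoset (Suc m) e r)"
    and "card (UNIV::'a set) < 3 * card (mtrace ` rho_dcoset (Suc m) e r)"
proof -
  let ?X = "\<lambda>u. blk3 m (unip_blocks m e (corner_sq m u) (corner_vec m u))"
  have XQ: "?X u \<in> Qgrp (Suc m) e" for u by (rule corner_unip_in_Qgrp[OF three])
  have "(\<lambda>u. u*u + (of_nat (m-r) + of_nat (m-r) + 2)) ` UNIV \<subseteq> mtrace ` dcoset (Suc m) e r"
  proof (rule image_subsetI)
    fix u show "u*u + (of_nat (m-r) + of_nat (m-r) + 2) \<in> mtrace ` dcoset (Suc m) e r"
      using mtrace_corner_unip(1)[OF r, of e u] mult_sigma_in_dcoset[OF XQ blk3_carrier]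
      by (metis image_eqI)
  qed
  thus "card (UNIV::'a set) < 3 * card (mtrace ` dcoset (Suc m) e r)"
    by (rule card_UNIV_lt_three_card_squares)
  have "(\<lambda>u. u*u + (of_nat (m-r) + of_nat (m-r))) ` UNIV \<subseteq> mtrace ` rho_dcoset (Suc m) e r"
  proof (rule image_subsetI)
    fix u show "u*u + (of_nat (m-r) + of_nat (m-r)) \<in> mtrace ` rho_dcoset (Suc m) e r"
      using mtrace_corner_unip(2)[OF r, of e u] rho_mult_sigma_in_rho_dcoset[OF XQ blk3_carrier]
      by (metis image_eqI)
  qed
  thus "card (UNIV::'a set) < 3 * card (mtrace ` rho_dcoset (Suc m) e r)"
    by (rule card_UNIV_lt_three_card_squares)
qed


section \<open>(E2) Levi elements with a rotation block: traces for sigma_0\<close>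

lemma det_2x2:
  fixes A :: "'a::comm_ring_1 mat" assumes A: "A \<in> carrier_mat 2 2"
  shows "det A = A$$(0,0)*A$$(1,1) - A$$(0,1)*A$$(1,0)"
proof -
  have det1: "det B = B$$(0,0)" if B: "B \<in> carrier_mat 1 1" for B :: "'a mat"
  proof -
    have "det B = (\<Sum>i<1. B $$ (i,0) * cofactor B i 0)" by (rule laplace_expansion_column[OF B], simp)
    thus ?thesis using B by (simp add: cofactor_def mat_delete_def)
  qed
  have "det A = (\<Sum>i<2. A $$ (i,0) * cofactor A i 0)" by (rule laplace_expansion_column[OF A], simp)
  thus ?thesis using A by (simp add: numeral_2_eq_2 cofactor_def mat_delete_def det1)
qed

(* Elements [[a, e b], [b, a]] with a^2 - e b^2 = 1 lie in SO^-(2,q).  The Cayley parametrisation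
   t |-> (a, b) = ((t^2+e)/(t^2-e), 2t/(t^2-e)) produces such pairs; the denominator never
   vanishes because e is a nonsquare. *)
definition cay_alpha :: "'a::field \<Rightarrow> 'a \<Rightarrow> 'a" where "cay_alpha e t = (t*t+e)/(t*t-e)"
definition cay_beta :: "'a::field \<Rightarrow> 'a \<Rightarrow> 'a" where "cay_beta e t = 2*t/(t*t-e)"
definition cay_mat :: "'a::field \<Rightarrow> 'a \<Rightarrow> 'a mat" where
  "cay_mat e t = mat 2 2 (\<lambda>(a,b). if a = b then cay_alpha e t else if a = 0 then e * cay_beta e t else cay_beta e t)"

lemma cay_norm:
  assumes eps: "nonsquare (e::'a::field)"
  shows "cay_alpha e t * cay_alpha e t - e * (cay_beta e t * cay_beta e t) = 1"
proof -
  have d: "t*t - e \<noteq> 0" using eps unfolding nonsquare_def by auto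
  have num: "(t*t+e)*(t*t+e) - e*(2*t*(2*t)) = (t*t-e)*(t*t-e)" by (simp add: algebra_simps)
  have "cay_alpha e t * cay_alpha e t - e * (cay_beta e t * cay_beta e t) =
      ((t*t+e)*(t*t+e))/((t*t-e)*(t*t-e)) - (e*(2*t*(2*t)))/((t*t-e)*(t*t-e))"
    unfolding cay_alpha_def cay_beta_def by (simp add: times_divide_times_eq)
  also have "\<dots> = ((t*t+e)*(t*t+e) - e*(2*t*(2*t)))/((t*t-e)*(t*t-e))"
    by (rule diff_divide_distrib[symmetric])
  also have "\<dots> = 1" unfolding num using d by simp
  finally show ?thesis .
qed

lemma cay_mat_index[simp]: "cay_mat e t $$ (0,0) = cay_alpha e t" "cay_mat e t $$ (1,1) = cay_alpha e t"
  "cay_mat e t $$ (Suc 0,Suc 0) = cay_alpha e t" "cay_mat e t $$ (0,1) = e * cay_beta e t"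
  "cay_mat e t $$ (0,Suc 0) = e * cay_beta e t"
  "cay_mat e t $$ (1,0) = cay_beta e t" "cay_mat e t $$ (Suc 0,0) = cay_beta e t"
  "dim_row (cay_mat e t) = 2" "dim_col (cay_mat e t) = 2"
  unfolding cay_mat_def by simp_all

lemma cay_mat_SO2minus:
  assumes eps: "nonsquare (e::'a::field)"
  shows "cay_mat e t \<in> SO2minus e"
proof -
  note n = cay_norm[OF eps, of t]
  have car: "cay_mat e t \<in> carrier_mat 2 2" unfolding cay_mat_def by simp
  have det: "det (cay_mat e t) = 1" unfolding det_2x2[OF car] using n by (simp add: algebra_simps)
  have prod: "transpose_mat (cay_mat e t) * delta_eps e * cay_mat e t = delta_eps e"
  proof (rule eq_matI)
    fix i j assume "i < dim_row (delta_eps e)" "j < dim_col (delta_eps e)"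
    hence "i = 0 \<or> i = 1" "j = 0 \<or> j = 1" by auto
    moreover have "(transpose_mat (cay_mat e t) * delta_eps e) $$ (i,k) = cay_mat e t $$ (k,i) * delta_eps e $$ (k,k)"
      if "i < 2" "k < 2" for i k
      using that by (auto simp: scalar_prod_def numeral_2_eq_2 less_Suc_eq)
    ultimately show "(transpose_mat (cay_mat e t) * delta_eps e * cay_mat e t) $$ (i, j) = delta_eps e $$ (i, j)"
      using n by (auto simp: scalar_prod_def numeral_2_eq_2 algebra_simps)
  qed auto
  show ?thesis unfolding SO2minus_def using car det prod by simp
qed

(* alpha(x) = alpha(y) forces x^2 = y^2 (using 2 e ~= 0). *)
lemma cay_alpha_fibre:
  fixes e x y :: "'a::field"
  assumes eps: "nonsquare e" and three: "(3::'a) = 0" and eq: "cay_alpha e x = cay_alpha e y"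
  shows "y = x \<or> y = - x"
proof -
  have dx: "x*x - e \<noteq> 0" and dy: "y*y - e \<noteq> 0" and e0: "e \<noteq> 0"
    using eps unfolding nonsquare_def by auto
  have "(x*x+e)*(y*y-e) = (y*y+e)*(x*x-e)" using eq dx dy unfolding cay_alpha_def by (simp add: frac_eq_eq)
  hence "2*e*(y*y) = 2*e*(x*x)" by (simp add: algebra_simps)
  hence "y*y = x*x" using two_neq_zero_char3[OF three] e0 by simp
  thus ?thesis using square_eq_iff by metis
qed

lemma mtrace_cay_levi:
  "mtrace (blk3 m (levi_blocks m (1\<^sub>m m) (1\<^sub>m m) (cay_mat e t)) * sigma_mat (Suc m) 0)
     = of_nat m + of_nat m + cay_alpha e t + cay_alpha e (t::'a::field)"
proof -
  let ?L = "levi_blocks m (1\<^sub>m m) (1\<^sub>m m) (cay_mat e t)"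
  have s2: "(\<Sum>j\<in>{0..<m}. ?L 0 0 $$ (j,j)) = of_nat m"
    by (subst sum.cong[OF refl, where h="\<lambda>_. 1"]) (auto simp: levi_blocks_def)
  have s4: "(\<Sum>j\<in>{0..<m}. ?L 1 1 $$ (j,j)) = of_nat m"
    by (subst sum.cong[OF refl, where h="\<lambda>_. 1"]) (auto simp: levi_blocks_def)
  have s5: "?L 2 2 $$ (0,0) = cay_alpha e t" "?L 2 2 $$ (1,1) = cay_alpha e t"
    by (auto simp: levi_blocks_def)
  show ?thesis unfolding mtrace_blk3_sigma[OF le0] s2 s4 s5 by simp
qed

lemma many_traces_sigma0:
  fixes e :: "'a::{finite,field}"
  assumes three: "(3::'a) = 0" and eps: "nonsquare e"
  shows "card (UNIV::'a set) < 3 * card (mtrace ` dcoset (Suc m) e 0)"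
proof -
  let ?X = "\<lambda>t. blk3 m (levi_blocks m (1\<^sub>m m) (1\<^sub>m m) (cay_mat e t))"
  have XQ: "?X t \<in> Qgrp (Suc m) e" for t
    by (rule levi_in_Qgrp) (auto simp: cay_mat_SO2minus[OF eps])
  define f where "f t = of_nat m + of_nat m + cay_alpha e t + cay_alpha e t" for t
  have sub: "f ` UNIV \<subseteq> mtrace ` dcoset (Suc m) e 0"
  proof (rule image_subsetI)
    fix t show "f t \<in> mtrace ` dcoset (Suc m) e 0"
      using mtrace_cay_levi[of m e t] mult_sigma_in_dcoset[OF XQ blk3_carrier]
      unfolding f_def by (metis image_eqI)
  qed
  show ?thesis
  proof (rule card_UNIV_lt_three_card[OF sub finite, where g=uminus and k=0])
    fix x y assume "f x = f y"
    hence "2 * cay_alpha e x = 2 * cay_alpha e y" unfolding f_def by (simp add: algebra_simps)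
    hence "cay_alpha e x = cay_alpha e y" using two_neq_zero_char3[OF three] by simp
    thus "y = x \<or> y = - x" by (rule cay_alpha_fibre[OF eps three])
  next
    show "0 < card (mtrace ` dcoset (Suc m) e 0)" using sub by (auto simp: card_gt_0_iff)
  qed simp
qed


section \<open>(E3) Levi elements diag(a, 1/a, 1): traces m (a + 1/a) for rho sigma_0\<close>

definition scal_mat :: "nat \<Rightarrow> 'a::field \<Rightarrow> 'a mat" where "scal_mat m a = a \<cdot>\<^sub>m 1\<^sub>m m"

lemma scal_mat_mult: "scal_mat m a * scal_mat m b = scal_mat m (a * b)"
proof -
  have "(a \<cdot>\<^sub>m 1\<^sub>m m) * (b \<cdot>\<^sub>m 1\<^sub>m m) = a \<cdot>\<^sub>m (1\<^sub>m m * (b \<cdot>\<^sub>m 1\<^sub>m m))"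
    by (rule mult_smult_assoc_mat) auto
  also have "\<dots> = (a*b) \<cdot>\<^sub>m 1\<^sub>m m" by (rule eq_matI) auto
  finally show ?thesis unfolding scal_mat_def .
qed

lemma scal_mat_one: "scal_mat m 1 = 1\<^sub>m m"
  unfolding scal_mat_def by (rule eq_matI) auto

lemma inverse_sum_fibre:
  fixes a b c :: "'a::field"
  assumes c: "c \<noteq> 0" and a: "a \<noteq> 0" and b: "b \<noteq> 0"
    and eq: "c * a + c * inverse a = c * b + c * inverse b"
  shows "b = a \<or> b = inverse a"
proof -
  have "a + inverse a = b + inverse b" using eq c by (simp add: distrib_left[symmetric])
  hence "(a + inverse a) * (a*b) = (b + inverse b) * (a*b)" by simp
  moreover have "(a + inverse a) * (a*b) = a*a*b + inverse a * a * b" by (simp add: algebra_simps)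
  moreover have "(b + inverse b) * (a*b) = a*b*b + inverse b * b * a" by (simp add: algebra_simps)
  ultimately have "a*a*b + b = a*b*b + a" using a b by simp
  hence "(a - b) * (a*b - 1) = 0" by (simp add: algebra_simps)
  hence "b = a \<or> a*b = 1" by auto
  thus ?thesis using a by (auto simp: field_simps)
qed

(* Tr(rho diag(a 1_m, a^-1 1_m, 1_2) sigma_0) = m a + m/a: the two entries of the SO^- block cancel. *)
lemma mtrace_rho_scal_levi:
  "mtrace (rho_mat (Suc m) * blk3 m (levi_blocks m (scal_mat m a) (scal_mat m (inverse a)) (1\<^sub>m 2))
      * sigma_mat (Suc m) 0) = of_nat m * a + of_nat m * inverse (a::'a::field)"
proof -
  let ?L = "levi_blocks m (scal_mat m a) (scal_mat m (inverse a)) (1\<^sub>m 2)"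
  have s2: "(\<Sum>j\<in>{0..<m}. ?L 0 0 $$ (j,j)) = of_nat m * a"
    by (subst sum.cong[OF refl, where h="\<lambda>_. a"]) (auto simp: levi_blocks_def scal_mat_def)
  have s4: "(\<Sum>j\<in>{0..<m}. ?L 1 1 $$ (j,j)) = of_nat m * inverse a"
    by (subst sum.cong[OF refl, where h="\<lambda>_. inverse a"]) (auto simp: levi_blocks_def scal_mat_def)
  have s5: "?L 2 2 $$ (0,0) = 1" "?L 2 2 $$ (1,1) = 1" by (auto simp: levi_blocks_def)
  show ?thesis unfolding mtrace_rho_blk3_sigma[OF le0] s2 s4 s5 by simp
qed

(* Here the parameter ranges over the q-1 units, so besides the fibre bound one needs two
   distinct values, m(1+1) ~= m(-1-1). *)
lemma many_traces_rho_sigma0: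
  fixes e :: "'a::{finite,field}"
  assumes three: "(3::'a) = 0" and m: "(of_nat m :: 'a) \<noteq> 0"
  shows "card (UNIV::'a set) < 3 * card (mtrace ` rho_dcoset (Suc m) e 0)"
proof -
  let ?X = "\<lambda>a. blk3 m (levi_blocks m (scal_mat m a) (scal_mat m (inverse a)) (1\<^sub>m 2))"
  have XQ: "a \<noteq> 0 \<Longrightarrow> ?X a \<in> Qgrp (Suc m) e" for a
    by (rule levi_in_Qgrp) (auto simp: scal_mat_mult scal_mat_one one_SO2minus scal_mat_def)
  define f where "f a = of_nat m * a + of_nat m * inverse a" for a :: 'a
  have sub: "f ` (UNIV - {0}) \<subseteq> mtrace ` rho_dcoset (Suc m) e 0"
  proof (rule image_subsetI)
    fix a :: 'a assume "a \<in> UNIV - {0}"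
    thus "f a \<in> mtrace ` rho_dcoset (Suc m) e 0"
      using mtrace_rho_scal_levi[of m a] rho_mult_sigma_in_rho_dcoset[OF XQ blk3_carrier]
      unfolding f_def by (metis DiffE image_eqI singletonI)
  qed
  have "f 1 \<noteq> f (-1)"
  proof
    assume "f 1 = f (-1)"
    hence "2 * (2 * (of_nat m :: 'a)) = 0" unfolding f_def by (simp add: algebra_simps)
    thus False using m two_neq_zero_char3[OF three] by (metis mult_eq_0_iff)
  qed
  moreover have "card {f 1, f (-1)} \<le> card (mtrace ` rho_dcoset (Suc m) e 0)"
    using sub by (intro card_mono) auto
  ultimately have two: "1 < card (mtrace ` rho_dcoset (Suc m) e 0)" by simp
  show ?thesis
  proof (rule card_UNIV_lt_three_card[OF sub finite _ _ two])
    show "x \<in> UNIV - {0} \<Longrightarrow> y \<in> UNIV - {0} \<Longrightarrow> f x = f y \<Longrightarrow> y = x \<or> y = inverse x" for x y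
      unfolding f_def using inverse_sum_fibre[OF m] by blast
    show "card (UNIV::'a set) \<le> card (UNIV - {0::'a}) + 1" by (simp add: card_Diff_singleton)
  qed
qed


(* In each case of the theorem D contains one of the three families: sigma_r with r >= 1
   gives (E1); the remaining cases are D = Q sigma_0 Q for n = 1, 2 (E2) and
   D = rho Q sigma_0 Q for n = 2, 3 (E3). *)
lemma DC_many_traces:
  fixes e :: "'a::{finite,field}"
  assumes three: "(3::'a) = 0" and eps: "nonsquare e"
    and i: "i = 1 \<or> (i \<in> {2,3} \<and> 1 \<le> m) \<or> (i = 4 \<and> 2 \<le> m)"
  shows "card (UNIV::'a set) < 3 * card (mtrace ` DC i (Suc m) e)"
proof -
  have m1: "(of_nat 1 :: 'a) \<noteq> 0" and m2: "(of_nat 2 :: 'a) \<noteq> 0"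
    using two_neq_zero_char3[OF three] by simp_all
  consider "i = 1" "m = 0" | "i = 1" "1 \<le> m" | "i = 2" "m = 1" | "i = 2" "2 \<le> m"
    | "i = 3" "m = 1" | "i = 3" "2 \<le> m" | "i = 4" "m = 2" | "i = 4" "3 \<le> m"
    using i by (cases "m = 0"; cases "m = 1"; cases "m = 2") auto
  then show ?thesis
  proof cases
    case 1 thus ?thesis using many_traces_sigma0[OF three eps, of 0] by (simp add: DC_def)
  next
    case 2 thus ?thesis using many_traces_sigma_pos(1)[OF three, of m m e] by (simp add: DC_def)
  next
    case 3 thus ?thesis using many_traces_sigma0[OF three eps, of 1] by (simp add: DC_def)
  next
    case 4 thus ?thesis using many_traces_sigma_pos(1)[OF three, of "m-1" m e] by (simp add: DC_def)
  next
    case 5 thus ?thesis using many_traces_rho_sigma0[OF three m1, of e] by (simp add: DC_def)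
  next
    case 6 thus ?thesis using many_traces_sigma_pos(2)[OF three, of "m-1" m e] by (simp add: DC_def)
  next
    case 7 thus ?thesis using many_traces_rho_sigma0[OF three m2, of e] by (simp add: DC_def)
  next
    case 8 thus ?thesis using many_traces_sigma_pos(2)[OF three, of "m-2" m e] by (simp add: DC_def)
  qed
qed

theorem theorem14:
  fixes e :: "'a::{finite,field}" and s n i :: nat
  assumes q: "card (UNIV :: 'a set) = 3 ^ s"
    and eps: "nonsquare e"
    and cases: "(even n \<and> n \<ge> 2 \<and> i \<in> {1,2,3})
              \<or> (even n \<and> n \<ge> 4 \<and> i = 4)
              \<or> (odd n \<and> i = 1)
              \<or> (odd n \<and> n \<ge> 3 \<and> i \<in> {2,3,4})"
    and gs: "distinct gs" "set gs = DC i n e"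
  shows "inj (codeword s gs)"
proof -
  have three: "(3::'a) = 0" by (rule char3_of_card[OF q])
  have "n \<noteq> 0" using cases by (auto elim: oddE)
  then obtain m where n: "n = Suc m" using not0_implies_Suc by blast
  have "i = 1 \<or> (i \<in> {2,3} \<and> 1 \<le> m) \<or> (i = 4 \<and> 2 \<le> m)"
    using cases unfolding n by (auto elim: oddE)
  hence "card (UNIV::'a set) < 3 * card (mtrace ` set gs)"
    unfolding gs(2) n by (rule DC_many_traces[OF three eps])
  thus ?thesis by (rule codeword_inj_of_many_traces[OF q])
qed

end
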